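(* Consider a simple point process in a domain $D\subset\mathbb C$ with counting function $N$. Let $z_1,\ldots,z_n\in D$. Assume there exist disjoint neighborhoods $D_j$ of $z_j$, constants $\delta>0$, $c_2<\infty$, and an integral joint intensity $p$ of order $n+1$ satisfying, for every $j\in\{1,\ldots,n\}$, $$p(w_1,\ldots,w_n,w_* )<c_2|w_j-w_*|^{-2+\delta}\quad\text{for }(w_1,\ldots,w_n,w_* )\in D_1\times\cdots\times D_n\times D_j.$$ Let $N_{j,\epsilon}$ be the number of points in the disk of radius $\epsilon$ about $z_j$. Then as $\epsilon\to0$, $$\mathbf P(N_{1,\epsilon}=\cdots=N_{n,\epsilon}=1)\le\mathbf E(N_{1,\epsilon}\cdots N_{n,\epsilon})=\mathbf P(N_{1,\epsilon}=\cdots=N_{n,\epsilon}=1)+o(\epsilon^{2n}).$$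
   Context: A function $p$ on $D^k$ is an integral joint intensity (of order $k$) of a point process with counting function $N$ if for all disjoint Borel sets $\Lambda_1,\ldots,\Lambda_k\subset D$, $\mathbf E\prod_{i=1}^kN(\Lambda_i)=\int_{\Lambda_1\times\cdots\times\Lambda_k}p(z_1,\ldots,z_k)\,dz_1\cdots dz_k$ (Lebesgue measure). *)

theory Defs
  imports "HOL-Probability.Probability" "HOL-Library.Landau_Symbols"
begin

text \<open>A simple point process on a domain D in the complex plane is modelled as a random
  locally finite subset X of D (simplicity = no multiplicities). Counting function:\<close>

definition pp_count :: "complex set \<Rightarrow> complex set \<Rightarrow> ennreal" where
  "pp_count S \<Lambda> = (if finite (S \<inter> \<Lambda>) then of_nat (card (S \<inter> \<Lambda>)) else \<infinity>)"

definition simple_point_process ::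
  "'w measure \<Rightarrow> complex set \<Rightarrow> ('w \<Rightarrow> complex set) \<Rightarrow> bool" where
  "simple_point_process M D X \<longleftrightarrow>
     prob_space M \<and> open D \<and> connected D \<and>
     (\<forall>\<omega>\<in>space M. X \<omega> \<subseteq> D \<and> (\<forall>K. compact K \<and> K \<subseteq> D \<longrightarrow> finite (X \<omega> \<inter> K))) \<and>
     (\<forall>\<Lambda>\<in>sets borel. (\<lambda>\<omega>. pp_count (X \<omega>) \<Lambda>) \<in> borel_measurable M)"

definition integral_joint_intensity ::
  "'w measure \<Rightarrow> complex set \<Rightarrow> ('w \<Rightarrow> complex set) \<Rightarrow> nat \<Rightarrow> ((nat \<Rightarrow> complex) \<Rightarrow> real) \<Rightarrow> bool" where
  "integral_joint_intensity M D X k p \<longleftrightarrow>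
     p \<in> borel_measurable (PiM {..<k} (\<lambda>_. lborel)) \<and>
     (\<forall>\<Lambda> :: nat \<Rightarrow> complex set.
        (\<forall>i<k. \<Lambda> i \<in> sets borel \<and> \<Lambda> i \<subseteq> D) \<longrightarrow>
        (\<forall>i<k. \<forall>j<k. i \<noteq> j \<longrightarrow> \<Lambda> i \<inter> \<Lambda> j = {}) \<longrightarrow>
        (\<integral>\<^sup>+\<omega>. (\<Prod>i<k. pp_count (X \<omega>) (\<Lambda> i)) \<partial>M) =
        (\<integral>\<^sup>+w\<in>PiE {..<k} \<Lambda>. ennreal (p w) \<partial>PiM {..<k} (\<lambda>_. lborel)))"

end

theory Submission
  imports Defs
begin

(* Let N_j count the points in the disk B_j of radius eps about z_j. Pointwise,
   prod_j N_j <= [all N_j = 1] + sum_j (prod_{i ~= j} N_i) N_j (N_j - 1),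
   because a product of naturals that is neither 0 nor 1 has a factor m >= 2, and then
   m <= m (m - 1). The expectation of the j-th term is at most the integral of the
   (n+1)-point intensity p over B_1 x ... x B_n x B_j: the defining identity of p only
   applies to disjoint sets, so the two points in B_j are first separated by dyadic cells
   of level k, and Fatou's lemma lets k tend to infinity. The bound on p reduces that
   integral to c2 * (integral of |y - w_j|^(delta - 2) over a disk of radius 2 eps)
   * |B_1| ... |B_n| = O(eps^delta * eps^(2n)), the kernel being summed over dyadic
   annuli. *)

lemma card_pairs_distinct_images:
  fixes g :: "'a \<Rightarrow> 'b"
  assumes "finite S" "finite A" "g ` S \<subseteq> A"
  shows "card {xy \<in> S \<times> S. g (fst xy) \<noteq> g (snd xy)} =
    (\<Sum>ab\<in>{ab \<in> A \<times> A. fst ab \<noteq> snd ab}. card {x\<in>S. g x = fst ab} * card {x\<in>S. g x = snd ab})"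
proof -
  have "{xy \<in> S \<times> S. g (fst xy) \<noteq> g (snd xy)} =
      (\<Union>ab\<in>{ab \<in> A \<times> A. fst ab \<noteq> snd ab}. {x\<in>S. g x = fst ab} \<times> {x\<in>S. g x = snd ab})"
    using assms(3) by (auto simp: image_subset_iff)
  also have "card \<dots> = (\<Sum>ab\<in>{ab \<in> A \<times> A. fst ab \<noteq> snd ab}. card ({x\<in>S. g x = fst ab} \<times> {x\<in>S. g x = snd ab}))"
    using assms by (intro card_UN_disjoint) auto
  finally show ?thesis by (simp add: card_cartesian_product)
qed

lemma card_off_diagonal:
  assumes "finite S"
  shows "card {xy \<in> S \<times> S. fst xy \<noteq> snd xy} = card S * (card S - 1)"
proof -
  have "S \<times> S = {xy \<in> S \<times> S. fst xy \<noteq> snd xy} \<union> (\<lambda>x. (x, x)) ` S" by auto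
  moreover have "card ({xy \<in> S \<times> S. fst xy \<noteq> snd xy} \<union> (\<lambda>x. (x, x)) ` S)
      = card {xy \<in> S \<times> S. fst xy \<noteq> snd xy} + card ((\<lambda>x. (x, x)) ` S)"
    using assms by (intro card_Un_disjoint) auto
  moreover have "card ((\<lambda>x. (x, x)) ` S) = card S" by (rule card_image) (auto simp: inj_on_def)
  ultimately show ?thesis by (simp add: card_cartesian_product diff_mult_distrib2)
qed

lemma prod_le_all_one_plus_falling_factorials:
  fixes m :: "nat \<Rightarrow> nat"
  shows "(\<Prod>i<n. m i) \<le> (if \<forall>i<n. m i = 1 then 1 else 0) + (\<Sum>j<n. (\<Prod>i\<in>{..<n}-{j}. m i) * (m j * (m j - 1)))"
proof (cases "\<forall>i<n. m i = 1")
  case False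
  then obtain j where j: "j < n" "m j \<noteq> 1" by blast
  show ?thesis
  proof (cases "m j = 0")
    case True
    then have "(\<Prod>i<n. m i) = 0" using j by (intro prod_zero) auto
    then show ?thesis by (simp only: le0)
  next
    case False
    have "(\<Prod>i<n. m i) = (\<Prod>i\<in>{..<n}-{j}. m i) * m j"
      using j by (simp add: prod.remove[of _ j] mult.commute)
    also have "\<dots> \<le> (\<Prod>i\<in>{..<n}-{j}. m i) * (m j * (m j - 1))"
      using j False by (intro mult_left_mono) auto
    also have "\<dots> \<le> (\<Sum>j<n. (\<Prod>i\<in>{..<n}-{j}. m i) * (m j * (m j - 1)))"
      by (rule member_le_sum) (use j in auto)
    finally show ?thesis by (rule trans_le_add2)
  qed
next
  case True
  then have "(\<Prod>i<n. m i) = 1" by simp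
  then show ?thesis unfolding if_P[OF True] by (simp only: le_add1)
qed

section \<open>Dyadic cells\<close>

definition dyadic_cell :: "nat \<Rightarrow> complex \<Rightarrow> int \<times> int" where
  "dyadic_cell k x = (\<lfloor>2 ^ k * Re x\<rfloor>, \<lfloor>2 ^ k * Im x\<rfloor>)"

lemma sets_dyadic_cell [measurable]:
  assumes [measurable]: "B \<in> sets borel"
  shows "{x \<in> B. dyadic_cell k x = a} \<in> sets borel"
  unfolding dyadic_cell_def prod_eq_iff fst_conv snd_conv by measurable

lemma finite_dyadic_cell_image:
  assumes "bounded B"
  shows "finite (dyadic_cell k ` B)"
proof -
  obtain R where R: "\<And>x. x \<in> B \<Longrightarrow> cmod x \<le> R" using assms bounded_iff by blast
  define T :: real where "T = 2 ^ k * R"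
  have "\<bar>2 ^ k * f x\<bar> \<le> T" if "x \<in> B" "\<bar>f x\<bar> \<le> cmod x" for f x
    using R[OF that(1)] that(2) by (simp add: T_def abs_mult)
  then have "dyadic_cell k ` B \<subseteq> {\<lfloor>-T\<rfloor>..\<lfloor>T\<rfloor>} \<times> {\<lfloor>-T\<rfloor>..\<lfloor>T\<rfloor>}"
    using abs_Re_le_cmod abs_Im_le_cmod
    by (fastforce simp: dyadic_cell_def abs_le_iff intro: floor_mono)
  then show ?thesis by (rule finite_subset) simp
qed

lemma eventually_dyadic_cell_neq:
  assumes "x \<noteq> y"
  shows "\<forall>\<^sub>F k in sequentially. dyadic_cell k x \<noteq> dyadic_cell k y"
proof -
  obtain N where N: "2 / cmod (x - y) < 2 ^ N" using real_arch_pow[of 2] by auto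
  show ?thesis
  proof (rule eventually_sequentiallyI[of N])
    fix k assume "N \<le> k"
    then have "2 / cmod (x - y) < 2 ^ k" using N power_increasing[of N k "2::real"] by linarith
    then have far: "2 < 2 ^ k * cmod (x - y)" using assms by (simp add: field_simps)
    show "dyadic_cell k x \<noteq> dyadic_cell k y"
    proof
      assume "dyadic_cell k x = dyadic_cell k y"
      then have "\<bar>2 ^ k * Re x - 2 ^ k * Re y\<bar> < 1" "\<bar>2 ^ k * Im x - 2 ^ k * Im y\<bar> < 1"
        by (auto simp: dyadic_cell_def intro: floor_eq_imp_diff_1)
      then have "2 ^ k * \<bar>Re (x - y)\<bar> < 1" "2 ^ k * \<bar>Im (x - y)\<bar> < 1"
        by (simp_all add: abs_mult flip: right_diff_distrib)
      then have "2 ^ k * (\<bar>Re (x - y)\<bar> + \<bar>Im (x - y)\<bar>) < 2"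
        by (simp add: distrib_left)
      moreover have "cmod (x - y) \<le> \<bar>Re (x - y)\<bar> + \<bar>Im (x - y)\<bar>" by (rule cmod_le)
      ultimately show False using far
        by (smt (verit) mult_left_mono zero_le_power)
    qed
  qed
qed

lemma pp_count_finite: "finite (S \<inter> A) \<Longrightarrow> pp_count S A = of_nat (card (S \<inter> A))"
  by (simp add: pp_count_def)

lemma integral_joint_intensityD:
  assumes "integral_joint_intensity M D X k p"
    and "\<And>i. i < k \<Longrightarrow> \<Lambda> i \<in> sets borel" "\<And>i. i < k \<Longrightarrow> \<Lambda> i \<subseteq> D"
    and "\<And>i i'. i < k \<Longrightarrow> i' < k \<Longrightarrow> i \<noteq> i' \<Longrightarrow> \<Lambda> i \<inter> \<Lambda> i' = {}"
  shows "(\<integral>\<^sup>+\<omega>. (\<Prod>i<k. pp_count (X \<omega>) (\<Lambda> i)) \<partial>M) =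
    (\<integral>\<^sup>+w\<in>PiE {..<k} \<Lambda>. ennreal (p w) \<partial>PiM {..<k} (\<lambda>_. lborel))"
  using assms unfolding integral_joint_intensity_def by blast

lemma sets_all_pp_count_one:
  fixes n :: nat
  assumes meas: "\<forall>\<Lambda>\<in>sets borel. (\<lambda>\<omega>. pp_count (X \<omega>) \<Lambda>) \<in> borel_measurable M"
    and B: "\<And>i. i < n \<Longrightarrow> B i \<in> sets borel"
  shows "{\<omega>\<in>space M. \<forall>j<n. pp_count (X \<omega>) (B j) = 1} \<in> sets M"
proof -
  have "{\<omega>\<in>space M. pp_count (X \<omega>) (B j) = 1} \<in> sets M" if "j < n" for j
    using measurable_sets[OF meas[rule_format, OF B[OF that]], of "{1}"]
    by (simp add: vimage_def Int_def conj_commute)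
  then have "{\<omega>\<in>space M. \<forall>j\<in>{..<n}. pp_count (X \<omega>) (B j) = 1} \<in> sets M"
    by (intro sets.sets_Collect_finite_All) auto
  then show ?thesis by (simp only: lessThan_iff Ball_def)
qed

lemma measure_all_pp_count_one_le:
  fixes n :: nat
  assumes "prob_space M" and meas: "\<forall>\<Lambda>\<in>sets borel. (\<lambda>\<omega>. pp_count (X \<omega>) \<Lambda>) \<in> borel_measurable M"
    and B: "\<And>i. i < n \<Longrightarrow> B i \<in> sets borel"
  shows "ennreal (measure M {\<omega>\<in>space M. \<forall>j<n. pp_count (X \<omega>) (B j) = 1})
    \<le> (\<integral>\<^sup>+\<omega>. (\<Prod>j<n. pp_count (X \<omega>) (B j)) \<partial>M)"
proof -
  interpret prob_space M by fact
  define A where "A = {\<omega>\<in>space M. \<forall>j<n. pp_count (X \<omega>) (B j) = 1}"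
  have "A \<in> sets M" unfolding A_def using meas B by (rule sets_all_pp_count_one)
  then have "ennreal (measure M A) = (\<integral>\<^sup>+\<omega>. indicator A \<omega> \<partial>M)"
    by (simp add: emeasure_eq_measure)
  also have "\<dots> \<le> (\<integral>\<^sup>+\<omega>. (\<Prod>j<n. pp_count (X \<omega>) (B j)) \<partial>M)"
    by (intro nn_integral_mono) (simp add: A_def indicator_def)
  finally show ?thesis by (simp add: A_def)
qed

section \<open>Second factorial moments\<close>

(* The intensity identity only applies to disjoint sets. Coordinate n is a second copy of
   B j, and coordinates j and n are confined to the dyadic cells fst ab and snd ab, which
   are distinct; summed over all such pairs, these counts tend to N(B j) (N(B j) - 1)
   times the other counts. *)
definition cell_split ::
  "nat \<Rightarrow> nat \<Rightarrow> nat \<Rightarrow> (nat \<Rightarrow> complex set) \<Rightarrow> (int \<times> int) \<times> (int \<times> int) \<Rightarrow> nat \<Rightarrow> complex set" where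
  "cell_split n j k B ab i =
     (if i = j then {x \<in> B j. dyadic_cell k x = fst ab}
      else if i = n then {x \<in> B j. dyadic_cell k x = snd ab} else B i)"

definition distinct_cell_pairs :: "nat \<Rightarrow> complex set \<Rightarrow> ((int \<times> int) \<times> (int \<times> int)) set" where
  "distinct_cell_pairs k S = {ab \<in> dyadic_cell k ` S \<times> dyadic_cell k ` S. fst ab \<noteq> snd ab}"

definition dyadic_pair_count ::
  "('w \<Rightarrow> complex set) \<Rightarrow> nat \<Rightarrow> nat \<Rightarrow> (nat \<Rightarrow> complex set) \<Rightarrow> nat \<Rightarrow> 'w \<Rightarrow> ennreal" where
  "dyadic_pair_count X n j B k \<omega> =
     (\<Sum>ab\<in>distinct_cell_pairs k (B j). \<Prod>i<Suc n. pp_count (X \<omega>) (cell_split n j k B ab i))"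

lemma dyadic_pair_count_eq:
  assumes j: "j < n" and fin: "finite (X \<omega> \<inter> B j)" and bd: "bounded (B j)"
  shows "dyadic_pair_count X n j B k \<omega> = (\<Prod>i\<in>{..<n}-{j}. pp_count (X \<omega>) (B i)) *
     of_nat (card {xy \<in> (X \<omega> \<inter> B j) \<times> (X \<omega> \<inter> B j). dyadic_cell k (fst xy) \<noteq> dyadic_cell k (snd xy)})"
proof -
  define S where "S = X \<omega> \<inter> B j"
  have cell: "X \<omega> \<inter> {x \<in> B j. dyadic_cell k x = a} = {x \<in> S. dyadic_cell k x = a}" for a
    by (auto simp: S_def)
  have split: "{..<Suc n} = insert j (insert n ({..<n}-{j}))" using j by auto
  have rest: "(\<Prod>i\<in>{..<n}-{j}. pp_count (X \<omega>) (cell_split n j k B ab i)) =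
      (\<Prod>i\<in>{..<n}-{j}. pp_count (X \<omega>) (B i))" for ab
    by (intro prod.cong) (auto simp: cell_split_def)
  have "(\<Prod>i<Suc n. pp_count (X \<omega>) (cell_split n j k B ab i)) =
      (\<Prod>i\<in>{..<n}-{j}. pp_count (X \<omega>) (B i)) *
      of_nat (card {x \<in> S. dyadic_cell k x = fst ab} * card {x \<in> S. dyadic_cell k x = snd ab})" for ab
    using j fin unfolding split
    by (simp add: rest, simp add: cell_split_def pp_count_finite cell S_def[symmetric] mult_ac)
  then have "dyadic_pair_count X n j B k \<omega> = (\<Prod>i\<in>{..<n}-{j}. pp_count (X \<omega>) (B i)) *
      of_nat (\<Sum>ab\<in>distinct_cell_pairs k (B j).
        card {x \<in> S. dyadic_cell k x = fst ab} * card {x \<in> S. dyadic_cell k x = snd ab})"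
    by (simp add: dyadic_pair_count_def sum_distrib_left)
  also have "(\<Sum>ab\<in>distinct_cell_pairs k (B j).
        card {x \<in> S. dyadic_cell k x = fst ab} * card {x \<in> S. dyadic_cell k x = snd ab}) =
      card {xy \<in> S \<times> S. dyadic_cell k (fst xy) \<noteq> dyadic_cell k (snd xy)}"
    unfolding distinct_cell_pairs_def
    by (rule card_pairs_distinct_images[symmetric]) (use fin finite_dyadic_cell_image[OF bd] in \<open>auto simp: S_def\<close>)
  finally show ?thesis by (simp add: S_def)
qed

lemma liminf_dyadic_pair_count:
  assumes j: "j < n" and fin: "finite (X \<omega> \<inter> B j)" and bd: "bounded (B j)"
  shows "liminf (\<lambda>k. dyadic_pair_count X n j B k \<omega>) = (\<Prod>i\<in>{..<n}-{j}. pp_count (X \<omega>) (B i)) *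
     of_nat (card (X \<omega> \<inter> B j) * (card (X \<omega> \<inter> B j) - 1))"
proof -
  define S where "S = X \<omega> \<inter> B j"
  have "finite {xy \<in> S \<times> S. fst xy \<noteq> snd xy}" using fin by (simp add: S_def)
  then have "\<forall>\<^sub>F k in sequentially. \<forall>xy\<in>{xy \<in> S \<times> S. fst xy \<noteq> snd xy}.
      dyadic_cell k (fst xy) \<noteq> dyadic_cell k (snd xy)"
    by (rule eventually_ball_finite) (auto intro: eventually_dyadic_cell_neq)
  then have "\<forall>\<^sub>F k in sequentially. dyadic_pair_count X n j B k \<omega> =
      (\<Prod>i\<in>{..<n}-{j}. pp_count (X \<omega>) (B i)) * of_nat (card {xy \<in> S \<times> S. fst xy \<noteq> snd xy})"
  proof eventually_elim
    case (elim k)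
    then have "{xy \<in> S \<times> S. dyadic_cell k (fst xy) \<noteq> dyadic_cell k (snd xy)} = {xy \<in> S \<times> S. fst xy \<noteq> snd xy}"
      by auto
    then show ?case using dyadic_pair_count_eq[where X = X and \<omega> = \<omega> and B = B and k = k, OF j fin bd] by (simp add: S_def)
  qed
  then have "liminf (\<lambda>k. dyadic_pair_count X n j B k \<omega>) =
      (\<Prod>i\<in>{..<n}-{j}. pp_count (X \<omega>) (B i)) * of_nat (card {xy \<in> S \<times> S. fst xy \<noteq> snd xy})"
    by (intro lim_imp_Liminf tendsto_eventually) auto
  then show ?thesis using fin by (simp add: S_def card_off_diagonal)
qed

lemma prod_pp_count_le_liminf_pair_counts:
  assumes fin: "\<And>i. i < n \<Longrightarrow> finite (X \<omega> \<inter> B i)" and bd: "\<And>i. i < n \<Longrightarrow> bounded (B i)"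
  shows "(\<Prod>j<n. pp_count (X \<omega>) (B j)) \<le> (if \<forall>j<n. pp_count (X \<omega>) (B j) = 1 then 1 else 0)
      + (\<Sum>j<n. liminf (\<lambda>k. dyadic_pair_count X n j B k \<omega>))"
proof -
  define m where "m i = card (X \<omega> \<inter> B i)" for i
  have pp: "pp_count (X \<omega>) (B i) = of_nat (m i)" if "i < n" for i
    using fin[OF that] by (simp add: pp_count_finite m_def)
  have "(\<Prod>j<n. pp_count (X \<omega>) (B j)) = of_nat (\<Prod>j<n. m j)" by (simp add: pp of_nat_prod)
  also have "\<dots> \<le> (of_nat ((if \<forall>i<n. m i = 1 then 1 else 0) +
      (\<Sum>j<n. (\<Prod>i\<in>{..<n}-{j}. m i) * (m j * (m j - 1)))) :: ennreal)"
    by (rule of_nat_mono[OF prod_le_all_one_plus_falling_factorials])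
  also have "\<dots> = (if \<forall>j<n. pp_count (X \<omega>) (B j) = 1 then 1 else 0)
      + (\<Sum>j<n. liminf (\<lambda>k. dyadic_pair_count X n j B k \<omega>))"
    using fin bd by (simp add: pp liminf_dyadic_pair_count m_def[symmetric] of_nat_sum of_nat_prod)
  finally show ?thesis .
qed

lemma sets_cell_split:
  assumes "j < n" "i < Suc n" "\<And>i. i < n \<Longrightarrow> B i \<in> sets borel"
  shows "cell_split n j k B ab i \<in> sets borel"
  using assms by (auto simp: cell_split_def less_Suc_eq intro: sets_dyadic_cell)

lemma cell_split_subset: "cell_split n j k B ab i \<subseteq> (if i = n then B j else B i)"
  by (auto simp: cell_split_def)

lemma borel_measurable_dyadic_pair_count:
  assumes meas: "\<forall>\<Lambda>\<in>sets borel. (\<lambda>\<omega>. pp_count (X \<omega>) \<Lambda>) \<in> borel_measurable M"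
    and "j < n" "\<And>i. i < n \<Longrightarrow> B i \<in> sets borel"
  shows "dyadic_pair_count X n j B k \<in> borel_measurable M"
  unfolding dyadic_pair_count_def using assms
  by (intro borel_measurable_sum borel_measurable_prod_ennreal meas[rule_format] sets_cell_split) auto

lemma cell_split_disjoint:
  assumes j: "j < n" and disj: "\<And>i i'. i < n \<Longrightarrow> i' < n \<Longrightarrow> i \<noteq> i' \<Longrightarrow> B i \<inter> B i' = {}"
    and ab: "ab \<in> distinct_cell_pairs k (B j)" and i: "i < Suc n" "i' < Suc n" "i \<noteq> i'"
  shows "cell_split n j k B ab i \<inter> cell_split n j k B ab i' = {}"
proof (cases "{i, i'} = {j, n}")
  case True
  then show ?thesis using ab j by (auto simp: cell_split_def distinct_cell_pairs_def doubleton_eq_iff)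
next
  case False
  define u where "u l = (if l = n then j else l)" for l
  have "u i \<noteq> u i'" "u i < n" "u i' < n" using False i j by (auto simp: u_def less_Suc_eq)
  then have "B (u i) \<inter> B (u i') = {}" by (intro disj)
  moreover have "cell_split n j k B ab l \<subseteq> B (u l)" for l
    by (auto simp: u_def cell_split_def)
  ultimately show ?thesis by blast
qed

lemma sum_indicator_PiE_cell_split_le:
  assumes "j < n" "finite A"
  shows "(\<Sum>ab\<in>A. indicator (PiE {..<Suc n} (cell_split n j k B ab)) w)
    \<le> (indicator (PiE {..<Suc n} (\<lambda>i. if i = n then B j else B i)) w :: ennreal)"
proof -
  define c where "c = (dyadic_cell k (w j), dyadic_cell k (w n))"
  have "w \<in> PiE {..<Suc n} (cell_split n j k B ab) \<Longrightarrow> ab = c" for ab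
    using assms(1) PiE_mem[of w "{..<Suc n}" "cell_split n j k B ab" j]
      PiE_mem[of w "{..<Suc n}" "cell_split n j k B ab" n]
    by (auto simp: cell_split_def c_def prod_eq_iff)
  then have "(\<Sum>ab\<in>A. indicator (PiE {..<Suc n} (cell_split n j k B ab)) w) =
      (\<Sum>ab\<in>A. if ab = c then indicator (PiE {..<Suc n} (cell_split n j k B c)) w else (0::ennreal))"
    by (intro sum.cong) (auto simp: indicator_def)
  also have "\<dots> \<le> indicator (PiE {..<Suc n} (cell_split n j k B c)) w"
    using assms(2) by (simp add: sum.delta)
  also have "\<dots> \<le> indicator (PiE {..<Suc n} (\<lambda>i. if i = n then B j else B i)) w"
    using PiE_mono[of "{..<Suc n}" "cell_split n j k B c", OF cell_split_subset]
    by (auto simp: indicator_def)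
  finally show ?thesis .
qed

lemma nn_integral_dyadic_pair_count_le:
  assumes intens: "integral_joint_intensity M D X (Suc n) p"
    and meas: "\<forall>\<Lambda>\<in>sets borel. (\<lambda>\<omega>. pp_count (X \<omega>) \<Lambda>) \<in> borel_measurable M"
    and j: "j < n" and B: "\<And>i. i < n \<Longrightarrow> B i \<in> sets borel" "\<And>i. i < n \<Longrightarrow> B i \<subseteq> D"
    and disj: "\<And>i i'. i < n \<Longrightarrow> i' < n \<Longrightarrow> i \<noteq> i' \<Longrightarrow> B i \<inter> B i' = {}"
    and bd: "bounded (B j)"
  shows "(\<integral>\<^sup>+\<omega>. dyadic_pair_count X n j B k \<omega> \<partial>M) \<le>
    (\<integral>\<^sup>+w\<in>PiE {..<Suc n} (\<lambda>i. if i = n then B j else B i). ennreal (p w) \<partial>PiM {..<Suc n} (\<lambda>_. lborel))"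
proof -
  define P where "P = PiM {..<Suc n} (\<lambda>_. lborel :: complex measure)"
  define A where "A = distinct_cell_pairs k (B j)"
  define C where "C ab = PiE {..<Suc n} (cell_split n j k B ab)" for ab
  have fin: "finite A" using finite_dyadic_cell_image[OF bd] by (simp add: A_def distinct_cell_pairs_def)
  have sets: "cell_split n j k B ab i \<in> sets borel" if "i < Suc n" for ab i
    using B j that by (intro sets_cell_split) auto
  have subD: "cell_split n j k B ab i \<subseteq> D" if "i < Suc n" for ab i
    using cell_split_subset[of n j k B ab i] B(2)[of i] B(2)[of j] j that
    by (auto simp: less_Suc_eq split: if_splits)
  have [measurable]: "p \<in> borel_measurable P" using intens by (simp add: integral_joint_intensity_def P_def)
  have [measurable]: "C ab \<in> sets P" for ab
    unfolding C_def P_def using sets by (intro sets_PiM_I_finite) auto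
  have "(\<integral>\<^sup>+\<omega>. dyadic_pair_count X n j B k \<omega> \<partial>M) =
      (\<Sum>ab\<in>A. \<integral>\<^sup>+\<omega>. (\<Prod>i<Suc n. pp_count (X \<omega>) (cell_split n j k B ab i)) \<partial>M)"
    unfolding dyadic_pair_count_def A_def using sets
    by (intro nn_integral_sum borel_measurable_prod_ennreal meas[rule_format]) auto
  also have "\<dots> = (\<Sum>ab\<in>A. \<integral>\<^sup>+w. ennreal (p w) * indicator (C ab) w \<partial>P)"
  proof (intro sum.cong refl)
    fix ab assume "ab \<in> A"
    then show "(\<integral>\<^sup>+\<omega>. (\<Prod>i<Suc n. pp_count (X \<omega>) (cell_split n j k B ab i)) \<partial>M) =
        (\<integral>\<^sup>+w. ennreal (p w) * indicator (C ab) w \<partial>P)"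
      unfolding C_def P_def A_def
      by (intro integral_joint_intensityD[OF intens] sets subD cell_split_disjoint[OF j disj])
  qed
  also have "\<dots> = (\<integral>\<^sup>+w. ennreal (p w) * (\<Sum>ab\<in>A. indicator (C ab) w) \<partial>P)"
    by (subst nn_integral_sum[symmetric]) (auto simp: sum_distrib_left)
  also have "\<dots> \<le> (\<integral>\<^sup>+w. ennreal (p w) * indicator (PiE {..<Suc n} (\<lambda>i. if i = n then B j else B i)) w \<partial>P)"
    unfolding C_def by (intro nn_integral_mono mult_left_mono sum_indicator_PiE_cell_split_le[OF j fin]) auto
  finally show ?thesis by (simp add: P_def)
qed

lemma nn_integral_prod_pp_count_le:
  assumes intens: "integral_joint_intensity M D X (Suc n) p"
    and meas: "\<forall>\<Lambda>\<in>sets borel. (\<lambda>\<omega>. pp_count (X \<omega>) \<Lambda>) \<in> borel_measurable M"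
    and B: "\<And>i. i < n \<Longrightarrow> B i \<in> sets borel" "\<And>i. i < n \<Longrightarrow> B i \<subseteq> D"
    and disj: "\<And>i i'. i < n \<Longrightarrow> i' < n \<Longrightarrow> i \<noteq> i' \<Longrightarrow> B i \<inter> B i' = {}"
    and bd: "\<And>i. i < n \<Longrightarrow> bounded (B i)"
    and fin: "\<And>\<omega> i. \<omega> \<in> space M \<Longrightarrow> i < n \<Longrightarrow> finite (X \<omega> \<inter> B i)"
  shows "(\<integral>\<^sup>+\<omega>. (\<Prod>j<n. pp_count (X \<omega>) (B j)) \<partial>M)
    \<le> emeasure M {\<omega>\<in>space M. \<forall>j<n. pp_count (X \<omega>) (B j) = 1} +
      (\<Sum>j<n. \<integral>\<^sup>+w\<in>PiE {..<Suc n} (\<lambda>i. if i = n then B j else B i). ennreal (p w)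
                 \<partial>PiM {..<Suc n} (\<lambda>_. lborel))"
proof -
  define A where "A = {\<omega>\<in>space M. \<forall>j<n. pp_count (X \<omega>) (B j) = 1}"
  have [measurable]: "A \<in> sets M" unfolding A_def using meas B(1) by (rule sets_all_pp_count_one)
  have G: "dyadic_pair_count X n j B k \<in> borel_measurable M" if "j < n" for j k
    using meas that B(1) by (rule borel_measurable_dyadic_pair_count)
  then have liminf_G: "(\<lambda>\<omega>. liminf (\<lambda>k. dyadic_pair_count X n j B k \<omega>)) \<in> borel_measurable M"
    if "j < n" for j
    using that by (intro borel_measurable_liminf) auto
  have "(\<integral>\<^sup>+\<omega>. (\<Prod>j<n. pp_count (X \<omega>) (B j)) \<partial>M)
      \<le> (\<integral>\<^sup>+\<omega>. indicator A \<omega> + (\<Sum>j<n. liminf (\<lambda>k. dyadic_pair_count X n j B k \<omega>)) \<partial>M)"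
  proof (intro nn_integral_mono)
    fix \<omega> assume \<omega>: "\<omega> \<in> space M"
    then have "indicator A \<omega> = (if \<forall>j<n. pp_count (X \<omega>) (B j) = 1 then 1 else (0::ennreal))"
      by (simp add: A_def)
    then show "(\<Prod>j<n. pp_count (X \<omega>) (B j))
        \<le> indicator A \<omega> + (\<Sum>j<n. liminf (\<lambda>k. dyadic_pair_count X n j B k \<omega>))"
      using prod_pp_count_le_liminf_pair_counts[of n X \<omega> B, OF fin[OF \<omega>] bd] by (simp only:)
  qed
  also have "\<dots> = emeasure M A + (\<Sum>j<n. \<integral>\<^sup>+\<omega>. liminf (\<lambda>k. dyadic_pair_count X n j B k \<omega>) \<partial>M)"
  proof -
    have "(\<integral>\<^sup>+\<omega>. (\<Sum>j<n. liminf (\<lambda>k. dyadic_pair_count X n j B k \<omega>)) \<partial>M)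
        = (\<Sum>j<n. \<integral>\<^sup>+\<omega>. liminf (\<lambda>k. dyadic_pair_count X n j B k \<omega>) \<partial>M)"
      using liminf_G by (intro nn_integral_sum) auto
    then show ?thesis
      using liminf_G by (subst nn_integral_add) (auto intro!: borel_measurable_sum)
  qed
  also have "\<dots> \<le> emeasure M A + (\<Sum>j<n. liminf (\<lambda>k. \<integral>\<^sup>+\<omega>. dyadic_pair_count X n j B k \<omega> \<partial>M))"
    by (intro add_left_mono sum_mono nn_integral_liminf) (simp add: G)
  also have "\<dots> \<le> emeasure M A + (\<Sum>j<n. \<integral>\<^sup>+w\<in>PiE {..<Suc n} (\<lambda>i. if i = n then B j else B i).
      ennreal (p w) \<partial>PiM {..<Suc n} (\<lambda>_. lborel))"
    using B disj bd
    by (intro add_left_mono sum_mono Liminf_le always_eventually allI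
        nn_integral_dyadic_pair_count_le[OF intens meas]) auto
  finally show ?thesis by (simp add: A_def)
qed

section \<open>A singular kernel in the plane\<close>

(* Infinite on the diagonal, so that it dominates the intensity everywhere although the
   bound on p says nothing there; the diagonal is a null set. *)
definition singular_kernel :: "real \<Rightarrow> real \<Rightarrow> complex \<Rightarrow> complex \<Rightarrow> ennreal" where
  "singular_kernel c d a y = (if y = a then \<infinity> else ennreal (c * cmod (a - y) powr (d - 2)))"

(* Sum of the bounds 4 (r 2^-k)^2 * (r 2^-(k+1))^(d-2) over the dyadic annuli, divided by r^d. *)
definition kernel_ball_const :: "real \<Rightarrow> real" where
  "kernel_ball_const d = 4 * 2 powr (2 - d) / (1 - (1/2) powr d)"

lemma kernel_ball_const_nonneg: "0 < d \<Longrightarrow> 0 \<le> kernel_ball_const d"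
  using powr_less_mono'[of "1/2::real" 0 d] by (simp add: kernel_ball_const_def)

lemma emeasure_lborel_ball_complex_le:
  fixes a :: complex assumes "s \<ge> 0"
  shows "emeasure lborel (ball a s) \<le> ennreal (4 * s\<^sup>2)"
proof -
  have "ball a s \<subseteq> cbox (a - Complex s s) (a + Complex s s)"
  proof
    fix y assume "y \<in> ball a s"
    then have "cmod (y - a) < s" by (simp add: dist_norm norm_minus_commute)
    then show "y \<in> cbox (a - Complex s s) (a + Complex s s)"
      using abs_Re_le_cmod[of "y - a"] abs_Im_le_cmod[of "y - a"]
      by (auto simp: mem_box Basis_complex_def)
  qed
  then have "emeasure lborel (ball a s) \<le> emeasure lborel (cbox (a - Complex s s) (a + Complex s s))"
    by (intro emeasure_mono) auto
  also have "\<dots> = ennreal (4 * s\<^sup>2)"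
    using assms by (simp add: emeasure_lborel_cbox_eq Basis_complex_def power2_eq_square)
  finally show ?thesis .
qed

lemma ex_dyadic_shell:
  fixes t r :: real
  assumes "0 < t" "t < r"
  shows "\<exists>k. r / 2 ^ Suc k \<le> t \<and> t < r / 2 ^ k"
proof -
  obtain m where "r / t < 2 ^ m" using real_arch_pow[of 2 "r / t"] by auto
  then have ex: "\<exists>k. r / 2 ^ Suc k \<le> t"
    using assms by (intro exI[of _ m]) (simp add: field_simps)
  define k where "k = (LEAST k. r / 2 ^ Suc k \<le> t)"
  have "r / 2 ^ Suc k \<le> t" unfolding k_def by (rule LeastI_ex[OF ex])
  moreover have "t < r / 2 ^ k"
  proof (cases k)
    case (Suc k')
    then have "\<not> r / 2 ^ Suc k' \<le> t"
      using not_less_Least[of k' "\<lambda>k. r / 2 ^ Suc k \<le> t"] k_def by auto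
    then show ?thesis using Suc by simp
  qed (use assms in simp)
  ultimately show ?thesis by blast
qed

lemma dyadic_shell_term_eq:
  fixes r d :: real
  assumes "r > 0"
  shows "(r / 2 ^ k)\<^sup>2 * (r / 2 ^ Suc k) powr (d - 2) = 2 powr (2 - d) * r powr d * ((1/2) powr d) ^ k"
proof -
  define s where "s = r / 2 ^ k"
  have s: "s > 0" using assms by (simp add: s_def)
  have "(r / 2 ^ Suc k) powr (d - 2) = s powr (d - 2) * 2 powr (2 - d)"
    using s by (simp add: s_def powr_mult powr_divide powr_minus_divide) (simp add: powr_diff)
  moreover have "s\<^sup>2 * s powr (d - 2) = s powr d"
    using s by (simp add: powr_add[symmetric] flip: powr_numeral)
  moreover have "s powr d = r powr d * ((1/2) powr d) ^ k"
    using assms by (simp add: s_def powr_divide powr_realpow flip: powr_realpow) (simp add: powr_powr mult.commute)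
  ultimately show ?thesis by (simp add: s_def[symmetric] algebra_simps)
qed

lemma singular_kernel_le_dyadic_sum:
  assumes "r > 0" "d < 2" "c \<ge> 0" "y \<noteq> a"
  shows "indicator (ball a r) y * singular_kernel c d a y
    \<le> (\<Sum>k. ennreal (c * (r / 2 ^ Suc k) powr (d - 2)) * indicator (ball a (r / 2 ^ k)) y)"
proof (cases "y \<in> ball a r")
  case True
  define t where "t = cmod (a - y)"
  have "0 < t" "t < r" using True assms by (auto simp: t_def dist_norm)
  then obtain k where k: "r / 2 ^ Suc k \<le> t" "t < r / 2 ^ k" using ex_dyadic_shell by blast
  have "c * t powr (d - 2) \<le> c * (r / 2 ^ Suc k) powr (d - 2)"
    using assms \<open>0 < t\<close> k by (intro mult_left_mono powr_mono2') auto
  then have "indicator (ball a r) y * singular_kernel c d a y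
      \<le> ennreal (c * (r / 2 ^ Suc k) powr (d - 2)) * indicator (ball a (r / 2 ^ k)) y"
    using True assms k by (simp add: singular_kernel_def t_def[symmetric] dist_norm ennreal_leI)
  also have "\<dots> \<le> (\<Sum>k. ennreal (c * (r / 2 ^ Suc k) powr (d - 2)) * indicator (ball a (r / 2 ^ k)) y)"
    using sum_le_suminf[OF summableI, of "{k}"] by simp
  finally show ?thesis .
qed simp

lemma nn_integral_singular_kernel_ball_le:
  assumes r: "r > 0" and d: "0 < d" "d < 2" and c: "c \<ge> 0"
  shows "(\<integral>\<^sup>+y. indicator (ball a r) y * singular_kernel c d a y \<partial>lborel)
    \<le> ennreal (kernel_ball_const d * c * r powr d)"
proof -
  define q :: real where "q = (1/2) powr d"
  have q: "0 \<le> q" "q < 1" using d powr_less_mono'[of "1/2::real" 0 d] by (auto simp: q_def)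
  define h where "h k = ennreal (c * (r / 2 ^ Suc k) powr (d - 2))" for k
  have "AE y in lborel. y \<noteq> a"
    using emeasure_lborel_countable[of "{a}"] by (intro AE_I[of _ _ "{a}"]) auto
  then have "(\<integral>\<^sup>+y. indicator (ball a r) y * singular_kernel c d a y \<partial>lborel)
      \<le> (\<integral>\<^sup>+y. (\<Sum>k. h k * indicator (ball a (r / 2 ^ k)) y) \<partial>lborel)"
    by (intro nn_integral_mono_AE) (auto elim!: eventually_mono
        intro: singular_kernel_le_dyadic_sum[OF r d(2) c, unfolded h_def[symmetric]])
  also have "\<dots> = (\<Sum>k. h k * emeasure lborel (ball a (r / 2 ^ k)))"
    by (subst nn_integral_suminf) (auto intro!: borel_measurable_times_ennreal borel_measurable_indicator
        simp: nn_integral_cmult_indicator)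
  also have "\<dots> \<le> (\<Sum>k. h k * ennreal (4 * (r / 2 ^ k)\<^sup>2))"
    using r by (intro suminf_le mult_left_mono emeasure_lborel_ball_complex_le) auto
  also have "\<dots> = (\<Sum>k. ennreal (4 * 2 powr (2 - d) * c * r powr d * q ^ k))"
  proof (rule suminf_cong)
    fix k
    have "h k * ennreal (4 * (r / 2 ^ k)\<^sup>2) = ennreal (4 * ((r / 2 ^ k)\<^sup>2 * (r / 2 ^ Suc k) powr (d - 2)) * c)"
      using c by (simp add: h_def mult_ac flip: ennreal_mult)
    then show "h k * ennreal (4 * (r / 2 ^ k)\<^sup>2) = ennreal (4 * 2 powr (2 - d) * c * r powr d * q ^ k)"
      using dyadic_shell_term_eq[OF r, of k d] by (simp add: q_def mult_ac)
  qed
  also have "\<dots> = ennreal (\<Sum>k. 4 * 2 powr (2 - d) * c * r powr d * q ^ k)"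
    using q c by (intro suminf_ennreal2 summable_mult summable_geometric) auto
  also have "(\<Sum>k. 4 * 2 powr (2 - d) * c * r powr d * q ^ k) = kernel_ball_const d * c * r powr d"
    using q by (simp add: suminf_mult suminf_geometric summable_geometric kernel_ball_const_def q_def)
  finally show ?thesis .
qed

lemma nn_integral_PiE_singular_kernel_le:
  fixes B :: "nat \<Rightarrow> complex set"
  assumes j: "j < n" and B: "\<And>i. i < n \<Longrightarrow> B i \<in> sets borel"
    and diam: "\<And>x y. x \<in> B j \<Longrightarrow> y \<in> B j \<Longrightarrow> dist x y < r"
    and r: "r > 0" and d: "0 < d" "d < 2" and c: "c \<ge> 0"
  shows "(\<integral>\<^sup>+w\<in>PiE {..<Suc n} (\<lambda>i. if i = n then B j else B i).
            singular_kernel c d (w j) (w n) \<partial>PiM {..<Suc n} (\<lambda>_. lborel))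
    \<le> ennreal (kernel_ball_const d * c * r powr d) * (\<Prod>i<n. emeasure lborel (B i))"
proof -
  interpret product_sigma_finite "\<lambda>_::nat. lborel :: complex measure" by standard
  define L where "L i = (if i = n then B j else B i)" for i
  define K where "K = ennreal (kernel_ball_const d * c * r powr d)"
  define H where "H w = singular_kernel c d (w j) (w n) * indicator (PiE (insert n {..<n}) L) w" for w
  have [measurable]: "PiE (insert n {..<n}) L \<in> sets (PiM (insert n {..<n}) (\<lambda>_. lborel))"
    using B j by (intro sets_PiM_I_finite) (auto simp: L_def)
  have "j \<in> insert n {..<n}" "n \<in> insert n {..<n}" using j by auto
  then have "H \<in> borel_measurable (PiM (insert n {..<n}) (\<lambda>_. lborel))"
    unfolding H_def singular_kernel_def by measurable
  then have "integral\<^sup>N (PiM (insert n {..<n}) (\<lambda>_. lborel)) H =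
      (\<integral>\<^sup>+x. (\<integral>\<^sup>+y. H (x(n := y)) \<partial>lborel) \<partial>PiM {..<n} (\<lambda>_. lborel))"
    by (rule product_nn_integral_insert[of "{..<n}" n, simplified])
  also have "\<dots> \<le> (\<integral>\<^sup>+x. K * indicator (PiE {..<n} B) x \<partial>PiM {..<n} (\<lambda>_. lborel))"
  proof (intro nn_integral_mono)
    fix x assume "x \<in> space (PiM {..<n} (\<lambda>_. lborel :: complex measure))"
    then have "x \<in> extensional {..<n}" by (simp add: space_PiM PiE_def)
    then have H: "H (x(n := y)) = indicator (PiE {..<n} B) x * (indicator (B j) y * singular_kernel c d (x j) y)" for y
      using j by (auto simp: H_def L_def PiE_def Pi_def extensional_def indicator_def split: if_splits)
    have "(\<integral>\<^sup>+y. indicator (B j) y * singular_kernel c d (x j) y \<partial>lborel) \<le> K"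
      if "x j \<in> B j"
    proof -
      have "(\<integral>\<^sup>+y. indicator (B j) y * singular_kernel c d (x j) y \<partial>lborel)
          \<le> (\<integral>\<^sup>+y. indicator (ball (x j) r) y * singular_kernel c d (x j) y \<partial>lborel)"
        using diam[OF that] by (intro nn_integral_mono) (simp add: indicator_def)
      also have "\<dots> \<le> K"
        unfolding K_def by (rule nn_integral_singular_kernel_ball_le[OF r d c])
      finally show ?thesis .
    qed
    then show "(\<integral>\<^sup>+y. H (x(n := y)) \<partial>lborel) \<le> K * indicator (PiE {..<n} B) x"
      using j by (auto simp: H nn_integral_cmult indicator_def)
  qed
  also have "\<dots> = K * (\<Prod>i<n. emeasure lborel (B i))"
    using B by (simp add: nn_integral_cmult_indicator sets_PiM_I_finite, subst emeasure_PiM) auto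
  finally show ?thesis
    by (simp add: H_def[abs_def] L_def[abs_def] K_def lessThan_Suc)
qed

lemma intensity_le_singular_kernel:
  assumes bound: "\<forall>j<n. \<forall>w. (\<forall>i<n. w i \<in> Dn i) \<longrightarrow> w n \<in> Dn j \<longrightarrow> w n \<noteq> w j \<longrightarrow>
                   p w < c2 * cmod (w j - w n) powr (-2 + \<delta>)"
    and j: "j < n" and BD: "\<And>i. i < n \<Longrightarrow> B i \<subseteq> Dn i"
    and diam: "\<And>x y. x \<in> B j \<Longrightarrow> y \<in> B j \<Longrightarrow> dist x y < 1"
    and d: "d \<le> \<delta>" and c: "c2 \<le> c" "0 \<le> c"
    and w: "w \<in> PiE {..<Suc n} (\<lambda>i. if i = n then B j else B i)"
  shows "ennreal (p w) \<le> singular_kernel c d (w j) (w n)"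
proof (cases "w n = w j")
  case False
  have wi: "w i \<in> B i" if "i < n" for i using PiE_mem[OF w, of i] that by simp
  have wn: "w n \<in> B j" using PiE_mem[OF w, of n] by simp
  define t where "t = cmod (w j - w n)"
  have t: "0 < t" "t < 1"
    using False diam[OF wi[OF j] wn] by (auto simp: t_def dist_norm)
  have "p w < c2 * t powr (-2 + \<delta>)"
    using bound[rule_format, of j w] j wi wn BD False by (auto simp: t_def)
  also have "\<dots> \<le> c * t powr (d - 2)"
    using t d c by (intro mult_mono powr_mono') auto
  finally show ?thesis using False by (simp add: singular_kernel_def t_def ennreal_leI)
qed (simp add: singular_kernel_def)

lemma eventually_cball_subset:
  fixes a :: "'a::metric_space"
  assumes "open U" "a \<in> U"
  shows "\<forall>\<^sub>F \<epsilon> in at_right 0. cball a \<epsilon> \<subseteq> U"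
proof -
  obtain e where "e > 0" "cball a e \<subseteq> U" using assms open_contains_cball by blast
  then show ?thesis
    by (auto simp: eventually_at_right_field intro!: exI[of _ e] dest: subset_cball)
qed

lemma ennreal_eq_plus_little_o:
  fixes E :: "real \<Rightarrow> ennreal" and a :: "real \<Rightarrow> real"
  assumes lower: "\<And>\<epsilon>. ennreal (a \<epsilon>) \<le> E \<epsilon>" and a: "\<And>\<epsilon>. 0 \<le> a \<epsilon>"
    and upper: "\<forall>\<^sub>F \<epsilon> in at_right 0. E \<epsilon> \<le> ennreal (a \<epsilon> + C * \<epsilon> powr d * \<epsilon> ^ k)"
    and C: "0 \<le> C" and d: "0 < d"
  shows "\<exists>r. r \<in> o[at_right 0](\<lambda>\<epsilon>. \<epsilon> ^ k) \<and> (\<forall>\<^sub>F \<epsilon> in at_right 0. E \<epsilon> = ennreal (a \<epsilon> + r \<epsilon>))"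
proof (intro exI conjI)
  define r where "r \<epsilon> = enn2real (E \<epsilon>) - a \<epsilon>" for \<epsilon>
  have pos: "\<forall>\<^sub>F \<epsilon> in at_right (0::real). 0 < \<epsilon>" by (simp add: eventually_at_right_less)
  have r: "\<forall>\<^sub>F \<epsilon> in at_right 0. E \<epsilon> = ennreal (a \<epsilon> + r \<epsilon>) \<and> 0 \<le> r \<epsilon> \<and> r \<epsilon> \<le> C * \<epsilon> powr d * \<epsilon> ^ k"
    using upper pos
  proof eventually_elim
    case (elim \<epsilon>)
    have "0 \<le> a \<epsilon> + C * \<epsilon> powr d * \<epsilon> ^ k" using a[of \<epsilon>] C elim(2) by simp
    moreover have "E \<epsilon> < \<top>" using elim(1) ennreal_less_top le_less_trans by blast
    ultimately have "a \<epsilon> \<le> enn2real (E \<epsilon>)" "enn2real (E \<epsilon>) \<le> a \<epsilon> + C * \<epsilon> powr d * \<epsilon> ^ k"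
      and "E \<epsilon> = ennreal (enn2real (E \<epsilon>))"
      using enn2real_mono[OF lower[of \<epsilon>]] enn2real_mono[OF elim(1)] a[of \<epsilon>] by auto
    then show ?case by (simp add: r_def)
  qed
  then show "\<forall>\<^sub>F \<epsilon> in at_right 0. E \<epsilon> = ennreal (a \<epsilon> + r \<epsilon>)" by eventually_elim simp
  show "r \<in> o[at_right 0](\<lambda>\<epsilon>. \<epsilon> ^ k)"
  proof (rule landau_o.smallI)
    fix c :: real assume "c > 0"
    have "((\<lambda>\<epsilon>. \<epsilon> powr d) \<longlongrightarrow> 0) (at_right 0)"
      using d pos by (intro tendsto_zero_powrI tendsto_ident_at tendsto_const) (auto elim: eventually_mono)
    then have "((\<lambda>\<epsilon>. C * \<epsilon> powr d) \<longlongrightarrow> 0) (at_right 0)"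
      by (rule tendsto_mult_right_zero)
    then have "\<forall>\<^sub>F \<epsilon> in at_right 0. C * \<epsilon> powr d < c" using \<open>c > 0\<close> by (simp add: order_tendstoD(2))
    with r pos show "\<forall>\<^sub>F \<epsilon> in at_right 0. norm (r \<epsilon>) \<le> c * norm (\<epsilon> ^ k)"
    proof eventually_elim
      case (elim \<epsilon>)
      then have "C * \<epsilon> powr d * \<epsilon> ^ k \<le> c * \<epsilon> ^ k" by (intro mult_right_mono) auto
      then have "r \<epsilon> \<le> c * \<epsilon> ^ k" using elim by linarith
      then show ?case using elim by simp
    qed
  qed
qed

lemma nn_integral_intensity_PiE_balls_le:
  fixes \<epsilon> :: real
  assumes bound: "\<forall>j<n. \<forall>w. (\<forall>i<n. w i \<in> Dn i) \<longrightarrow> w n \<in> Dn j \<longrightarrow> w n \<noteq> w j \<longrightarrow>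
                   p w < c2 * cmod (w j - w n) powr (-2 + \<delta>)"
    and j: "j < n" and \<epsilon>: "0 < \<epsilon>" "\<epsilon> \<le> 1/2" and balls: "\<And>i. i < n \<Longrightarrow> ball (z i) \<epsilon> \<subseteq> Dn i"
    and d: "0 < d" "d \<le> \<delta>" "d < 2" and c: "c2 \<le> c" "0 \<le> c"
  shows "(\<integral>\<^sup>+w\<in>PiE {..<Suc n} (\<lambda>i. if i = n then ball (z j) \<epsilon> else ball (z i) \<epsilon>). ennreal (p w)
            \<partial>PiM {..<Suc n} (\<lambda>_. lborel))
    \<le> ennreal (kernel_ball_const d * c * 2 powr d * 4 ^ n * \<epsilon> powr d * \<epsilon> ^ (2 * n))"
proof -
  define B where "B i = ball (z i) \<epsilon>" for i
  define K where "K = kernel_ball_const d * c * (2 * \<epsilon>) powr d"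
  have K: "0 \<le> K" using \<epsilon> c kernel_ball_const_nonneg[OF d(1)] by (simp add: K_def)
  have diam: "dist x y < 2 * \<epsilon>" if "x \<in> B j" "y \<in> B j" for x y
    using that dist_triangle_less_add[of x "z j" \<epsilon> y \<epsilon>] by (auto simp: B_def dist_commute)
  have "ennreal (p w) \<le> singular_kernel c d (w j) (w n)"
    if "w \<in> PiE {..<Suc n} (\<lambda>i. if i = n then B j else B i)" for w
    using diam \<epsilon> balls
    by (intro intensity_le_singular_kernel[OF bound j _ _ d(2) c that]) (force simp: B_def)+
  then have "(\<integral>\<^sup>+w\<in>PiE {..<Suc n} (\<lambda>i. if i = n then B j else B i). ennreal (p w) \<partial>PiM {..<Suc n} (\<lambda>_. lborel))
      \<le> (\<integral>\<^sup>+w\<in>PiE {..<Suc n} (\<lambda>i. if i = n then B j else B i).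
            singular_kernel c d (w j) (w n) \<partial>PiM {..<Suc n} (\<lambda>_. lborel))"
    by (intro nn_integral_mono) (simp add: indicator_def)
  also have "\<dots> \<le> ennreal K * (\<Prod>i<n. emeasure lborel (B i))"
    unfolding K_def using j \<epsilon> d c diam by (intro nn_integral_PiE_singular_kernel_le) (auto simp: B_def)
  also have "\<dots> \<le> ennreal K * (\<Prod>i<n. ennreal (4 * \<epsilon>\<^sup>2))"
    using \<epsilon> by (intro mult_left_mono prod_mono_ennreal) (auto simp: B_def intro: emeasure_lborel_ball_complex_le)
  also have "\<dots> = ennreal (K * (4 * \<epsilon>\<^sup>2) ^ n)"
  proof -
    have "0 \<le> 4 * \<epsilon>\<^sup>2" by simp
    then show ?thesis
      by (simp only: prod_constant card_lessThan ennreal_power ennreal_mult[OF K zero_le_power])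
  qed
  also have "K * (4 * \<epsilon>\<^sup>2) ^ n = kernel_ball_const d * c * 2 powr d * 4 ^ n * \<epsilon> powr d * \<epsilon> ^ (2 * n)"
    using \<epsilon> by (simp add: K_def powr_mult power_mult_distrib power_mult)
  finally show ?thesis unfolding B_def .
qed

lemma nn_integral_prod_ball_counts_le:
  fixes \<epsilon> :: real
  assumes spp: "simple_point_process M D X"
    and Dn: "\<And>i. i < n \<Longrightarrow> Dn i \<subseteq> D"
    and disj: "\<forall>i<n. \<forall>j<n. i \<noteq> j \<longrightarrow> Dn i \<inter> Dn j = {}"
    and intens: "integral_joint_intensity M D X (Suc n) p"
    and bound: "\<forall>j<n. \<forall>w. (\<forall>i<n. w i \<in> Dn i) \<longrightarrow> w n \<in> Dn j \<longrightarrow> w n \<noteq> w j \<longrightarrow>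
                   p w < c2 * cmod (w j - w n) powr (-2 + \<delta>)"
    and \<epsilon>: "0 < \<epsilon>" "\<epsilon> \<le> 1/2" and cball: "\<And>i. i < n \<Longrightarrow> cball (z i) \<epsilon> \<subseteq> Dn i"
    and d: "0 < d" "d \<le> \<delta>" "d < 2" and c: "c2 \<le> c" "0 \<le> c"
  shows "(\<integral>\<^sup>+\<omega>. (\<Prod>j<n. pp_count (X \<omega>) (ball (z j) \<epsilon>)) \<partial>M)
    \<le> ennreal (measure M {\<omega>\<in>space M. \<forall>j<n. pp_count (X \<omega>) (ball (z j) \<epsilon>) = 1}
        + real n * kernel_ball_const d * c * 2 powr d * 4 ^ n * \<epsilon> powr d * \<epsilon> ^ (2 * n))"
proof -
  have "prob_space M" and Xfin: "\<And>\<omega> K. \<omega> \<in> space M \<Longrightarrow> compact K \<Longrightarrow> K \<subseteq> D \<Longrightarrow> finite (X \<omega> \<inter> K)"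
    and meas: "\<forall>\<Lambda>\<in>sets borel. (\<lambda>\<omega>. pp_count (X \<omega>) \<Lambda>) \<in> borel_measurable M"
    using spp unfolding simple_point_process_def by auto
  interpret prob_space M by fact
  define B where "B i = ball (z i) \<epsilon>" for i
  define Y where "Y = kernel_ball_const d * c * 2 powr d * 4 ^ n * \<epsilon> powr d * \<epsilon> ^ (2 * n)"
  have Y: "0 \<le> Y" using \<epsilon> c kernel_ball_const_nonneg[OF d(1)] by (simp add: Y_def)
  have BD: "B i \<subseteq> Dn i" if "i < n" for i using cball[OF that] by (auto simp: B_def)
  have B_sets: "B i \<in> sets borel" and B_D: "B i \<subseteq> D" and B_bounded: "bounded (B i)" if "i < n" for i
    using BD[OF that] Dn[OF that] by (auto simp: B_def)
  have B_disj: "B i \<inter> B i' = {}" if "i < n" "i' < n" "i \<noteq> i'" for i i'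
    using BD[OF that(1)] BD[OF that(2)] disj that by blast
  have B_fin: "finite (X \<omega> \<inter> B i)" if "\<omega> \<in> space M" "i < n" for \<omega> i
  proof -
    have "finite (X \<omega> \<inter> cball (z i) \<epsilon>)"
      using that cball[OF that(2)] Dn[OF that(2)] by (intro Xfin) auto
    then show ?thesis by (rule finite_subset[rotated]) (auto simp: B_def)
  qed
  have "(\<integral>\<^sup>+\<omega>. (\<Prod>j<n. pp_count (X \<omega>) (B j)) \<partial>M)
      \<le> emeasure M {\<omega>\<in>space M. \<forall>j<n. pp_count (X \<omega>) (B j) = 1} +
        (\<Sum>j<n. \<integral>\<^sup>+w\<in>PiE {..<Suc n} (\<lambda>i. if i = n then B j else B i). ennreal (p w)
                 \<partial>PiM {..<Suc n} (\<lambda>_. lborel))"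
    by (rule nn_integral_prod_pp_count_le[OF intens meas B_sets B_D B_disj B_bounded B_fin])
  also have "\<dots> \<le> emeasure M {\<omega>\<in>space M. \<forall>j<n. pp_count (X \<omega>) (B j) = 1} + (\<Sum>j<n. ennreal Y)"
    unfolding B_def Y_def using \<epsilon> d c BD
    by (intro add_left_mono sum_mono nn_integral_intensity_PiE_balls_le[OF bound]) (auto simp: B_def)
  also have "(\<Sum>j<n. ennreal Y) = ennreal (real n * Y)"
    by (simp add: ennreal_of_nat_eq_real_of_nat ennreal_mult'[symmetric])
  finally show ?thesis
    using Y by (simp add: B_def Y_def emeasure_eq_measure ennreal_plus mult.assoc)
qed

theorem lemma31:
  fixes M :: "'w measure" and D :: "complex set" and X :: "'w \<Rightarrow> complex set"
    and n :: nat and z :: "nat \<Rightarrow> complex" and Dn :: "nat \<Rightarrow> complex set"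
    and \<delta> c2 :: real and p :: "(nat \<Rightarrow> complex) \<Rightarrow> real"
  assumes spp: "simple_point_process M D X"
    and zD: "\<forall>j<n. z j \<in> D"
    and nbhd: "\<forall>j<n. open (Dn j) \<and> z j \<in> Dn j \<and> Dn j \<subseteq> D"
    and disj: "\<forall>i<n. \<forall>j<n. i \<noteq> j \<longrightarrow> Dn i \<inter> Dn j = {}"
    and \<delta>: "\<delta> > 0"
    and intens: "integral_joint_intensity M D X (Suc n) p"
    and bound: "\<forall>j<n. \<forall>w. (\<forall>i<n. w i \<in> Dn i) \<longrightarrow> w n \<in> Dn j \<longrightarrow> w n \<noteq> w j \<longrightarrow>
                   p w < c2 * cmod (w j - w n) powr (-2 + \<delta>)"
  shows "(\<forall>\<epsilon>>0. ennreal (measure M {\<omega>\<in>space M. \<forall>j<n. pp_count (X \<omega>) (ball (z j) \<epsilon>) = 1})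
                 \<le> (\<integral>\<^sup>+\<omega>. (\<Prod>j<n. pp_count (X \<omega>) (ball (z j) \<epsilon>)) \<partial>M)) \<and>
         (\<exists>r :: real \<Rightarrow> real. r \<in> o[at_right 0](\<lambda>\<epsilon>. \<epsilon> ^ (2 * n)) \<and>
            (\<forall>\<^sub>F \<epsilon> in at_right 0.
               (\<integral>\<^sup>+\<omega>. (\<Prod>j<n. pp_count (X \<omega>) (ball (z j) \<epsilon>)) \<partial>M) =
               ennreal (measure M {\<omega>\<in>space M. \<forall>j<n. pp_count (X \<omega>) (ball (z j) \<epsilon>) = 1} + r \<epsilon>)))"
proof -
  define P where "P \<epsilon> = measure M {\<omega>\<in>space M. \<forall>j<n. pp_count (X \<omega>) (ball (z j) \<epsilon>) = 1}" for \<epsilon>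
  define E where "E \<epsilon> = (\<integral>\<^sup>+\<omega>. (\<Prod>j<n. pp_count (X \<omega>) (ball (z j) \<epsilon>)) \<partial>M)" for \<epsilon>
  define d where "d = min \<delta> 1"
  define c where "c = max c2 0"
  define C where "C = real n * kernel_ball_const d * c * 2 powr d * 4 ^ n"
  have d: "0 < d" "d \<le> \<delta>" "d < 2" using \<delta> by (auto simp: d_def)
  have c: "c2 \<le> c" "0 \<le> c" by (auto simp: c_def)
  have C: "0 \<le> C" using c kernel_ball_const_nonneg[OF d(1)] by (simp add: C_def)
  have lower: "ennreal (P \<epsilon>) \<le> E \<epsilon>" for \<epsilon>
    using spp unfolding P_def E_def simple_point_process_def
    by (intro measure_all_pp_count_one_le) auto
  have "\<forall>\<^sub>F \<epsilon> in at_right 0. \<forall>i\<in>{..<n}. cball (z i) \<epsilon> \<subseteq> Dn i"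
    using nbhd by (intro eventually_ball_finite) (auto intro: eventually_cball_subset)
  moreover have "\<forall>\<^sub>F \<epsilon> in at_right (0::real). 0 < \<epsilon> \<and> \<epsilon> \<le> 1/2"
    by (auto simp: eventually_at_right_field intro!: exI[of _ "1/2"])
  ultimately have upper: "\<forall>\<^sub>F \<epsilon> in at_right 0. E \<epsilon> \<le> ennreal (P \<epsilon> + C * \<epsilon> powr d * \<epsilon> ^ (2 * n))"
    by eventually_elim
      (use nn_integral_prod_ball_counts_le[OF spp _ disj intens bound _ _ _ d c] nbhd
        in \<open>simp add: P_def E_def C_def mult.assoc\<close>)
  have "\<exists>r. r \<in> o[at_right 0](\<lambda>\<epsilon>. \<epsilon> ^ (2 * n)) \<and> (\<forall>\<^sub>F \<epsilon> in at_right 0. E \<epsilon> = ennreal (P \<epsilon> + r \<epsilon>))"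
    by (rule ennreal_eq_plus_little_o[OF lower _ upper C d(1)]) (simp add: P_def)
  with lower show ?thesis by (simp add: P_def E_def)
qed

end
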